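(* Let $(\Omega,\mathcal G,\mathbb P)$ be a probability space, $\mathcal F=(\mathcal F_n)_{n\in\mathbb N_0}$ a filtration on $\Omega$ with $\mathcal F_\infty\subset\mathcal G$, $(E,\mathcal E)$ a measurable space, and $Y=(Y_n)_{n\in\mathbb N}$ an $\mathcal F$-adapted sequence of $(E,\mathcal E)$-valued random elements such that for every $i\in\mathbb N_0$, $Y_{i+1}$ is independent of $\mathcal F_i$ and has the same law as $Y_1$. Let $\mathcal L$ be the law of $Y$ on $(E^{\mathbb N},\mathcal E^{\otimes\mathbb N})$. Let $R:\Omega\to\mathbb N_0\cup\{\infty\}$ be $\mathcal G$-measurable with $\mathbb P(R<\infty)>0$. Consider the statements: (a) $\mathcal F_R'$ is independent of $\Box_RY$ under $\mathbb P'$; (b) there are $G\in\mathcal E^{\otimes\mathbb N}$ and, for every $n\in\mathbb N_0$ with $\mathbb P(R=n)>0$, an $F_n\in\mathcal F_n$, such that a.s. $\{R=n\}=F_n\cap\{\Box_nY\in G\}$; (i) $\mathcal F_R'$ is independent of $\Box_RY$ under $\mathbb P'$ and the law of $\Box_RY$ under $\mathbb P'$ is $\mathcal L$; (ii) $R$ is a stopping time relative to the completion of $\mathcal F$. Then (b) implies (a), and (ii) implies (i). If in addition $\{R=n\}\in\overline{\mathcal F_n\vee\sigma(\Box_nY)}$ for each $n\in\mathbb N_0$, then (a) implies (b) and (i) implies (ii). Moreover, when (b) holds, $G$ is $\mathcal L$-a.s. unique, the $F_n$ are a.s. unique, and the law of $\Box_RY$ under $\mathbb P'$ equals $\mathbb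 P(Y\in\cdot\mid Y\in G)=\mathcal L(\cdot\mid G)$.
   Context: For $n\in\mathbb N_0$, $\Box_nY:=(Y_{n+i})_{i\in\mathbb N}$, and on $\{R<\infty\}$, $\Box_RY:=(Y_{R+i})_{i\in\mathbb N}$. $\mathcal F_R'$ is the $\sigma$-field on $\{R<\infty\}$ generated by the maps $Z_R$ (restricted to $\{R<\infty\}$) as $Z$ ranges over all $\mathcal F$-adapted real-valued processes $Z=(Z_n)_{n\in\mathbb N_0}$. $\mathbb P'$ is the probability $A\mapsto\mathbb P(A\mid R<\infty)$ on the trace $\sigma$-field $\mathcal G|_{\{R<\infty\}}$. For a sub-$\sigma$-field $\mathcal H\subset\mathcal G$, $\overline{\mathcal H}$ denotes the $\sigma$-field generated by $\mathcal H$ and the $\mathbb P$-negligible sets of $\mathcal G$; the completion of a filtration is obtained by completing each member. "a.s." refers to $\mathbb P$. *)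

theory Defs
  imports "HOL-Probability.Probability"
begin

text \<open>Shifted sequence: box n Y w = (Y_(n+1), Y_(n+2), ...); index i of the result
  (i = 0,1,2,...) corresponds to the paper's index i+1.\<close>
definition box :: "nat \<Rightarrow> (nat \<Rightarrow> 'a \<Rightarrow> 'b) \<Rightarrow> 'a \<Rightarrow> nat \<Rightarrow> 'b" where
  "box n Y w = (\<lambda>i. Y (n + Suc i) w)"

abbreviation seqspace :: "'b measure \<Rightarrow> (nat \<Rightarrow> 'b) measure" where
  "seqspace E \<equiv> PiM UNIV (\<lambda>_. E)"

definition fin_set :: "'a measure \<Rightarrow> ('a \<Rightarrow> enat) \<Rightarrow> 'a set" where
  "fin_set M R = {w \<in> space M. R w \<noteq> \<infinity>}"

definition boxR :: "('a \<Rightarrow> enat) \<Rightarrow> (nat \<Rightarrow> 'a \<Rightarrow> 'b) \<Rightarrow> 'a \<Rightarrow> nat \<Rightarrow> 'b" where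
  "boxR R Y w = box (the_enat (R w)) Y w"

definition condP :: "'a measure \<Rightarrow> ('a \<Rightarrow> enat) \<Rightarrow> 'a measure" where
  "condP M R = measure_of (fin_set M R) (sets (restrict_space M (fin_set M R)))
     (\<lambda>A. emeasure M A / emeasure M (fin_set M R))"

definition FR' :: "'a measure \<Rightarrow> (nat \<Rightarrow> 'a measure) \<Rightarrow> ('a \<Rightarrow> enat) \<Rightarrow> 'a set set" where
  "FR' M F R = sigma_sets (fin_set M R)
     {(\<lambda>w. Z (the_enat (R w)) w) -` B \<inter> fin_set M R | Z B.
        (\<forall>n. Z n \<in> borel_measurable (F n)) \<and> B \<in> sets (borel :: real measure)}"

definition sigma_boxR :: "'a measure \<Rightarrow> 'b measure \<Rightarrow> ('a \<Rightarrow> enat) \<Rightarrow> (nat \<Rightarrow> 'a \<Rightarrow> 'b) \<Rightarrow> 'a set set" where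
  "sigma_boxR M E R Y = {boxR R Y -` A \<inter> fin_set M R | A. A \<in> sets (seqspace E)}"

definition sigma_box :: "'a measure \<Rightarrow> 'b measure \<Rightarrow> nat \<Rightarrow> (nat \<Rightarrow> 'a \<Rightarrow> 'b) \<Rightarrow> 'a set set" where
  "sigma_box M E n Y = {box n Y -` A \<inter> space M | A. A \<in> sets (seqspace E)}"

definition compl_sets :: "'a measure \<Rightarrow> 'a set set \<Rightarrow> 'a set set" where
  "compl_sets M H = sigma_sets (space M) (H \<union> null_sets M)"

definition law :: "'a measure \<Rightarrow> 'b measure \<Rightarrow> (nat \<Rightarrow> 'a \<Rightarrow> 'b) \<Rightarrow> (nat \<Rightarrow> 'b) measure" where
  "law M E Y = distr M (seqspace E) (box 0 Y)"

definition stmt_a where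
  "stmt_a M F E Y R \<longleftrightarrow> prob_space.indep_set (condP M R) (FR' M F R) (sigma_boxR M E R Y)"

definition b_witness where
  "b_witness M F E Y R G Fn \<longleftrightarrow> G \<in> sets (seqspace E) \<and>
     (\<forall>n::nat. measure M {w \<in> space M. R w = enat n} > 0 \<longrightarrow>
        Fn n \<in> sets (F n) \<and>
        (AE w in M. (R w = enat n \<longleftrightarrow> w \<in> Fn n \<and> box n Y w \<in> G)))"

definition stmt_b where
  "stmt_b M F E Y R \<longleftrightarrow> (\<exists>G Fn. b_witness M F E Y R G Fn)"

definition stmt_i where
  "stmt_i M F E Y R \<longleftrightarrow> stmt_a M F E Y R \<and>
     distr (condP M R) (seqspace E) (boxR R Y) = law M E Y"

definition stmt_ii where
  "stmt_ii M F R \<longleftrightarrow> (\<forall>n::nat. {w \<in> space M. R w \<le> enat n} \<in> compl_sets M (sets (F n)))"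

end

theory Submission
  imports Defs
begin

text \<open>Because \<open>\<box>\<^sub>nY\<close> is independent of \<open>\<F>\<^sub>n\<close> with law \<open>\<L>\<close>, the pair \<open>(\<omega>, \<box>\<^sub>nY)\<close> has the
  product law \<open>\<P>|\<^sub>\<F>\<^sub>n \<otimes> \<L>\<close>. If \<open>{R = n} = F\<^sub>n \<inter> {\<box>\<^sub>nY \<in> G}\<close> a.s., then on \<open>{R = n}\<close> the
  \<open>\<F>\<^sub>n\<close>-part and \<open>\<box>\<^sub>nY\<close> still factorize, with \<open>\<box>\<^sub>nY\<close> distributed as \<open>\<L>(\<cdot> | G)\<close>; summing
  over \<open>n\<close> gives (a) and the law of \<open>\<box>\<^sub>RY\<close>, and a stopping time is the case \<open>G = E\<^sup>\<nat>\<close>.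
  Conversely, if \<open>{R = n}\<close> is a.s. determined by \<open>(\<omega>, \<box>\<^sub>nY)\<close>, say by a set \<open>S\<close> of the product
  space, then (a) says that the indicator of \<open>S\<close> is the density of a product measure with
  respect to \<open>\<P>|\<^sub>\<F>\<^sub>n \<otimes> \<L>\<close>; a product of two densities that is an indicator is a.e. the
  indicator of the rectangle where both densities are nonzero, and the second factor is
  the density of the law of \<open>\<box>\<^sub>RY\<close>, which does not depend on \<open>n\<close>. Uniqueness follows
  from \<open>\<L>(G) > 0\<close>.\<close>

lemma compl_sets_sigma_algebra:
  assumes "H \<subseteq> sets M"
  shows "sigma_algebra (space M) (compl_sets M H)"
  unfolding compl_sets_def using assms sets.sets_into_space
  by (intro sigma_algebra_sigma_sets) (auto dest: null_setsD2)

lemma compl_sets_mono: "H \<subseteq> H' \<Longrightarrow> compl_sets M H \<subseteq> compl_sets M H'"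
  unfolding compl_sets_def by (intro sigma_sets_subseteq) auto

lemma compl_sets_AE_representative:
  assumes "A \<in> compl_sets M H"
  shows "\<exists>B\<in>sigma_sets (space M) H. AE w in M. w \<in> A \<longleftrightarrow> w \<in> B"
  using assms unfolding compl_sets_def
proof (induction rule: sigma_sets.induct)
  case (Basic a)
  show ?case
  proof (cases "a \<in> H")
    case False
    then have "AE w in M. w \<in> a \<longleftrightarrow> w \<in> {}"
      using Basic AE_not_in[of a M] by simp
    then show ?thesis by (intro bexI[of _ "{}"]) (auto intro: sigma_sets.Empty)
  qed auto
next
  case Empty
  show ?case by (intro bexI[of _ "{}"]) (auto intro: sigma_sets.Empty)
next
  case (Compl a)
  then obtain B where "B \<in> sigma_sets (space M) H" "AE w in M. w \<in> a \<longleftrightarrow> w \<in> B"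
    by blast
  moreover from this(2) have "AE w in M. w \<in> space M - a \<longleftrightarrow> w \<in> space M - B"
    by eventually_elim auto
  ultimately show ?case by (intro bexI[of _ "space M - B"] sigma_sets.Compl)
next
  case (Union A)
  then obtain B where B: "\<And>i. B i \<in> sigma_sets (space M) H"
    "\<And>i. AE w in M. w \<in> A i \<longleftrightarrow> w \<in> B i"
    by metis
  then have "AE w in M. \<forall>i. w \<in> A i \<longleftrightarrow> w \<in> B i"
    by (simp add: AE_all_countable)
  then have "AE w in M. w \<in> (\<Union>i. A i) \<longleftrightarrow> w \<in> (\<Union>i. B i)"
    by eventually_elim auto
  then show ?case using B(1) by (intro bexI[of _ "\<Union>i. B i"] sigma_sets.Union)
qed

lemma compl_setsI_AE_eq:
  assumes H: "H \<subseteq> sets M" and "B \<in> H" "N \<in> sets M"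
    and ae: "AE w in M. w \<in> N \<longleftrightarrow> w \<in> B"
  shows "N \<in> compl_sets M H"
proof -
  interpret S: sigma_algebra "space M" "compl_sets M H"
    by (rule compl_sets_sigma_algebra[OF H])
  have generator: "X \<in> H \<union> null_sets M \<Longrightarrow> X \<in> compl_sets M H" for X
    unfolding compl_sets_def by (rule sigma_sets.Basic)
  have "B \<in> sets M" using H \<open>B \<in> H\<close> by auto
  have "AE x in M. x \<notin> B - N" "AE x in M. x \<notin> N - B"
    using ae by (eventually_elim, auto)+
  then have "B - N \<in> null_sets M" "N - B \<in> null_sets M"
    using \<open>B \<in> sets M\<close> \<open>N \<in> sets M\<close> by (auto simp: AE_iff_null_sets)
  then have "(B - (B - N)) \<union> (N - B) \<in> compl_sets M H"
    using \<open>B \<in> H\<close> by (intro S.Un S.Diff generator) auto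
  moreover have "N = (B - (B - N)) \<union> (N - B)" by blast
  ultimately show ?thesis by simp
qed

section \<open>Product densities that are indicators\<close>

text \<open>The density of \<open>\<nu> \<otimes> \<mu>\<close> is a.e. the product of the two Radon-Nikodym densities,
  and such a product is an indicator only of the rectangle where both factors are nonzero.\<close>

lemma AE_mem_rectangle_if_density_indicator_eq_pair_measure:
  assumes P: "sigma_finite_measure P" and L: "sigma_finite_measure L"
    and nu: "absolutely_continuous P \<nu>" "sets \<nu> = sets P"
    and mu: "sigma_finite_measure \<mu>" "absolutely_continuous L \<mu>" "sets \<mu> = sets L"
    and S: "S \<in> sets (P \<Otimes>\<^sub>M L)"
    and eq: "\<nu> \<Otimes>\<^sub>M \<mu> = density (P \<Otimes>\<^sub>M L) (indicator S)"
  shows "AE z in P \<Otimes>\<^sub>M L. z \<in> S \<longleftrightarrow>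
    z \<in> {x \<in> space P. RN_deriv P \<nu> x \<noteq> 0} \<times> {y \<in> space L. RN_deriv L \<mu> y \<noteq> 0}"
proof -
  let ?f = "RN_deriv P \<nu>" and ?g = "RN_deriv L \<mu>"
  have "density P ?f = \<nu>" "density L ?g = \<mu>"
    using sigma_finite_measure.density_RN_deriv[OF P nu]
      sigma_finite_measure.density_RN_deriv[OF L mu(2,3)] by auto
  then have "density (P \<Otimes>\<^sub>M L) (indicator S) = density (P \<Otimes>\<^sub>M L) (\<lambda>(x, y). ?f x * ?g y)"
    using eq pair_measure_density[of ?f P ?g L] L mu(1) by simp
  moreover have "sigma_finite_measure (P \<Otimes>\<^sub>M L)"
    using P L by (rule sigma_finite_pair_measure)
  ultimately have "AE z in P \<Otimes>\<^sub>M L. indicator S z = (\<lambda>(x, y). ?f x * ?g y) z"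
    using S by (intro sigma_finite_measure.density_unique) auto
  then show ?thesis
  proof eventually_elim
    case (elim z)
    then show ?case
      using sets.sets_into_space[OF S]
      by (cases z) (auto simp: space_pair_measure split: split_indicator split_indicator_asm)
  qed
qed

section \<open>Independence of the future from the past\<close>

locale iid_innovations = prob_space M for M :: "'a measure" +
  fixes F :: "nat \<Rightarrow> 'a measure" and E :: "'b measure" and Y :: "nat \<Rightarrow> 'a \<Rightarrow> 'b"
  assumes filtration_F: "filtration (space M) F"
    and sets_F_subset: "\<And>n. sets (F n) \<subseteq> sets M"
    and Y_measurable_F: "\<And>n. n \<ge> 1 \<Longrightarrow> Y n \<in> measurable (F n) E"
    and indep_F_Y: "\<And>i. indep_set (sets (F i)) {Y (Suc i) -` A \<inter> space M | A. A \<in> sets E}"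
    and distr_Y_eq: "\<And>i. distr M E (Y (Suc i)) = distr M E (Y 1)"
begin

lemma space_F: "space (F n) = space M"
  using filtration.space_F[OF filtration_F] by simp

lemma sets_F_mono: "m \<le> n \<Longrightarrow> sets (F m) \<subseteq> sets (F n)"
  using filtration.sets_F_mono[OF filtration_F] by simp

lemma subalgebra_F: "subalgebra M (F n)"
  unfolding subalgebra_def using space_F sets_F_subset by simp

lemma sets_F_events: "D \<in> sets (F n) \<Longrightarrow> D \<in> events"
  using sets_F_subset by blast

lemma space_in_sets_F: "space M \<in> sets (F n)"
  using sets.top[of "F n"] space_F by simp

lemma Y_measurable: "Y (Suc i) \<in> measurable M E"
  using measurable_from_subalg[OF subalgebra_F Y_measurable_F] by simp

lemma Y_vimage_sets_F: "Suc i \<le> n \<Longrightarrow> A \<in> sets E \<Longrightarrow> Y (Suc i) -` A \<inter> space M \<in> sets (F n)"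
  using measurable_sets[OF Y_measurable_F, of "Suc i" A] space_F sets_F_mono[of "Suc i" n] by auto

lemma box_measurable: "box n Y \<in> measurable M (seqspace E)"
  unfolding box_def
  using Y_measurable measurable_space[OF Y_measurable]
  by (intro measurable_PiM_single') (auto simp: Pi_iff)

lemma box_in_space: "w \<in> space M \<Longrightarrow> box n Y w \<in> space (seqspace E)"
  using measurable_space[OF box_measurable] by blast

lemma box_vimage_events: "A \<in> sets (seqspace E) \<Longrightarrow> box n Y -` A \<inter> space M \<in> events"
  by (rule measurable_sets[OF box_measurable])

lemma sets_law: "sets (law M E Y) = sets (seqspace E)"
  unfolding law_def by simp

lemma space_law: "space (law M E Y) = space (seqspace E)"
  unfolding law_def by simp

lemma prob_space_law: "prob_space (law M E Y)"
  unfolding law_def by (rule prob_space_distr[OF box_measurable])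

end

sublocale iid_innovations \<subseteq> law: prob_space "law M E Y"
  by (rule prob_space_law)

context iid_innovations
begin

lemma measure_law: "A \<in> sets (seqspace E) \<Longrightarrow> measure (law M E Y) A = prob (box 0 Y -` A \<inter> space M)"
  unfolding law_def by (simp add: measure_distr box_measurable)

lemma prob_Int_Y_vimage:
  assumes "D \<in> sets (F i)" "A \<in> sets E"
  shows "prob (D \<inter> (Y (Suc i) -` A \<inter> space M)) = prob D * prob (Y 1 -` A \<inter> space M)"
proof -
  have "prob (Y (Suc i) -` A \<inter> space M) = prob (Y 1 -` A \<inter> space M)"
    using measure_distr[OF Y_measurable \<open>A \<in> sets E\<close>, of i] distr_Y_eq[of i]
      measure_distr[OF Y_measurable[of 0] \<open>A \<in> sets E\<close>] by simp
  moreover have "prob (D \<inter> (Y (Suc i) -` A \<inter> space M)) = prob D * prob (Y (Suc i) -` A \<inter> space M)"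
    using indep_setD[OF indep_F_Y[of i] \<open>D \<in> sets (F i)\<close>] \<open>A \<in> sets E\<close> by blast
  ultimately show ?thesis by simp
qed

lemma cylinder_Suc:
  "{w \<in> space M. \<forall>i<Suc k. Y (n + Suc i) w \<in> A i}
     = {w \<in> space M. \<forall>i<k. Y (n + Suc i) w \<in> A i} \<inter> (Y (Suc (n + k)) -` A k \<inter> space M)"
  by (auto simp: less_Suc_eq)

lemma cylinder_sets_F:
  assumes "\<And>i. A i \<in> sets E"
  shows "{w \<in> space M. \<forall>i<k. Y (n + Suc i) w \<in> A i} \<in> sets (F (n + k))"
proof (induction k)
  case 0
  then show ?case using space_in_sets_F by simp
next
  case (Suc k)
  have "{w \<in> space M. \<forall>i<k. Y (n + Suc i) w \<in> A i} \<in> sets (F (n + Suc k))"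
    by (rule subsetD[OF sets_F_mono Suc.IH]) simp
  moreover have "Y (Suc (n + k)) -` A k \<inter> space M \<in> sets (F (n + Suc k))"
    using Y_vimage_sets_F[of "n + k" "n + Suc k" "A k"] assms by simp
  ultimately show ?case
    unfolding cylinder_Suc by (rule sets.Int)
qed

lemma prob_Int_cylinder:
  assumes D: "D \<in> sets (F n)" and A: "\<And>i. A i \<in> sets E"
  shows "prob (D \<inter> {w \<in> space M. \<forall>i<k. Y (n + Suc i) w \<in> A i})
     = prob D * (\<Prod>i<k. prob (Y 1 -` A i \<inter> space M))"
proof (induction k)
  case 0
  then show ?case using sets.sets_into_space[OF D] space_F[of n] by (simp add: Int_absorb2)
next
  case (Suc k)
  let ?C = "{w \<in> space M. \<forall>i<k. Y (n + Suc i) w \<in> A i}"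
  have "D \<in> sets (F (n + k))" using D sets_F_mono[of n "n + k"] by auto
  then have DC: "D \<inter> ?C \<in> sets (F (n + k))" using cylinder_sets_F[OF A] by (rule sets.Int)
  have "prob (D \<inter> {w \<in> space M. \<forall>i<Suc k. Y (n + Suc i) w \<in> A i})
      = prob ((D \<inter> ?C) \<inter> (Y (Suc (n + k)) -` A k \<inter> space M))"
    unfolding cylinder_Suc by (simp only: Int_assoc)
  also have "\<dots> = prob (D \<inter> ?C) * prob (Y 1 -` A k \<inter> space M)"
    by (rule prob_Int_Y_vimage[OF DC A])
  finally show ?case
    using Suc.IH by (simp add: mult.assoc)
qed

lemma box_vimage_prod_emb:
  assumes J: "J \<subseteq> {..<k}" and B: "\<And>i. i \<in> J \<Longrightarrow> B i \<in> sets E"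
  shows "box m Y -` prod_emb UNIV (\<lambda>_. E) J (Pi\<^sub>E J B) \<inter> space M
     = {w \<in> space M. \<forall>i<k. Y (m + Suc i) w \<in> (if i \<in> J then B i else space E)}"
  using J measurable_space[OF Y_measurable] unfolding box_def
  by (auto simp: prod_emb_iff PiE_iff restrict_def extensional_def) (use J in blast)

lemma prob_Int_box_vimage_prod_emb:
  assumes D: "D \<in> sets (F n)" and J: "finite J" and B: "\<And>i. i \<in> J \<Longrightarrow> B i \<in> sets E"
  shows "prob (D \<inter> (box n Y -` prod_emb UNIV (\<lambda>_. E) J (Pi\<^sub>E J B) \<inter> space M))
    = prob D * measure (law M E Y) (prod_emb UNIV (\<lambda>_. E) J (Pi\<^sub>E J B))"
proof -
  obtain k where k: "J \<subseteq> {..<k}" using finite_nat_bounded[OF J] by blast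
  let ?X = "prod_emb UNIV (\<lambda>_. E) J (Pi\<^sub>E J B)"
  let ?A = "\<lambda>i. if i \<in> J then B i else space E"
  have A: "\<And>i. ?A i \<in> sets E" using B by auto
  have X: "?X \<in> sets (seqspace E)" using B J by (intro sets_PiM_I) auto
  have "box m Y -` ?X \<inter> space M = {w \<in> space M. \<forall>i<k. Y (m + Suc i) w \<in> ?A i}" for m
    by (rule box_vimage_prod_emb[OF k B])
  then have "prob (D \<inter> (box n Y -` ?X \<inter> space M)) = prob D * (\<Prod>i<k. prob (Y 1 -` ?A i \<inter> space M))"
    and "prob (space M \<inter> (box 0 Y -` ?X \<inter> space M)) = prob (space M) * (\<Prod>i<k. prob (Y 1 -` ?A i \<inter> space M))"
    by (simp_all only: prob_Int_cylinder[OF D A] prob_Int_cylinder[OF space_in_sets_F A])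
  then show ?thesis
    using measure_law[OF X] by (simp add: Int_absorb1 prob_space)
qed

text \<open>Both sides are finite measures in \<open>A\<close> that agree on cylinders.\<close>

lemma prob_Int_box_vimage:
  assumes D: "D \<in> sets (F n)" and A: "A \<in> sets (seqspace E)"
  shows "prob (D \<inter> (box n Y -` A \<inter> space M)) = prob D * measure (law M E Y) A"
proof -
  have DM: "D \<in> events" using sets_F_events[OF D] .
  let ?P = "distr (density M (indicator D)) (seqspace E) (box n Y)"
  let ?Q = "density (law M E Y) (\<lambda>_. ennreal (prob D))"
  have box_meas: "box n Y \<in> measurable (density M (indicator D)) (seqspace E)"
    using box_measurable by (simp add: measurable_cong_sets[OF sets_density refl])
  have "?P = ?Q"
  proof (rule measure_eqI_PiM_infinite)
    show "sets ?P = sets (seqspace E)" "sets ?Q = sets (seqspace E)"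
      by (simp_all add: sets_law)
    interpret D: finite_measure "density M (indicator D)"
      using finite_measure_restricted[OF DM] .
    show "finite_measure ?P" by (rule D.finite_measure_distr[OF box_meas])
  next
    fix J :: "nat set" and B assume J: "finite J" and B: "\<And>i. i \<in> J \<Longrightarrow> B i \<in> sets E"
    let ?X = "prod_emb UNIV (\<lambda>_. E) J (Pi\<^sub>E J B)"
    have X: "?X \<in> sets (seqspace E)" using B J by (intro sets_PiM_I) auto
    have "emeasure ?P ?X = emeasure M (D \<inter> (box n Y -` ?X \<inter> space M))"
      using X box_meas by (simp add: emeasure_distr emeasure_restricted DM box_vimage_events)
    also have "\<dots> = ennreal (prob D) * ennreal (measure (law M E Y) ?X)"
      using prob_Int_box_vimage_prod_emb[OF D J B]
      by (simp add: emeasure_eq_measure ennreal_mult)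
    also have "\<dots> = emeasure ?Q ?X"
      using X by (simp add: emeasure_density_const law.emeasure_eq_measure sets_law)
    finally show "emeasure ?P ?X = emeasure ?Q ?X" .
  qed
  then have "measure ?P A = measure ?Q A" by simp
  moreover have "measure ?P A = prob (D \<inter> (box n Y -` A \<inter> space M))"
    using A box_meas by (simp add: measure_distr measure_restricted DM box_vimage_events)
  moreover have "measure ?Q A = prob D * measure (law M E Y) A"
    using A by (simp add: measure_density_const sets_law)
  ultimately show ?thesis by simp
qed

lemma prob_box_vimage: "A \<in> sets (seqspace E) \<Longrightarrow> prob (box n Y -` A \<inter> space M) = measure (law M E Y) A"
  using prob_Int_box_vimage[OF space_in_sets_F] by (simp add: Int_absorb1 prob_space)

lemma prob_mult_law_eq_0_if_AE_disjoint:
  assumes D: "D \<in> sets (F n)" and A: "A \<in> sets (seqspace E)"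
    and ae: "AE w in M. \<not> (w \<in> D \<and> box n Y w \<in> A)"
  shows "prob D * measure (law M E Y) A = 0"
proof -
  have "AE w in M. w \<in> D \<inter> (box n Y -` A \<inter> space M) \<longleftrightarrow> w \<in> {}"
    using ae by eventually_elim auto
  then have "prob (D \<inter> (box n Y -` A \<inter> space M)) = prob {}"
    using sets_F_events[OF D] box_vimage_events[OF A] by (intro measure_eq_AE) auto
  then show ?thesis using prob_Int_box_vimage[OF D A] by simp
qed

abbreviation past_future_pair :: "nat \<Rightarrow> 'a \<Rightarrow> 'a \<times> (nat \<Rightarrow> 'b)" where
  "past_future_pair n w \<equiv> (w, box n Y w)"

lemma sets_restr_F: "sets (restr_to_subalg M (F n)) = sets (F n)"
  by (rule sets_restr_to_subalg[OF subalgebra_F])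

lemma space_restr_F: "space (restr_to_subalg M (F n)) = space M"
  by (rule space_restr_to_subalg)

lemma prob_space_restr_F: "prob_space (restr_to_subalg M (F n))"
  by (rule prob_space_restr_to_subalg[OF subalgebra_F prob_space_axioms])

lemma past_future_pair_measurable:
  "past_future_pair n \<in> measurable M (restr_to_subalg M (F n) \<Otimes>\<^sub>M law M E Y)"
proof (rule measurable_Pair)
  show "(\<lambda>w. w) \<in> measurable M (restr_to_subalg M (F n))"
    by (rule measurableI) (auto simp: space_restr_F sets_restr_F sets_F_events)
  show "box n Y \<in> measurable M (law M E Y)"
    using box_measurable by (simp add: measurable_cong_sets[OF refl sets_law])
qed

lemma distr_past_future_pair:
  "distr M (restr_to_subalg M (F n) \<Otimes>\<^sub>M law M E Y) (past_future_pair n)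
     = restr_to_subalg M (F n) \<Otimes>\<^sub>M law M E Y"
proof (rule pair_measure_eqI[symmetric])
  show "sigma_finite_measure (restr_to_subalg M (F n))" "sigma_finite_measure (law M E Y)"
    using prob_space_restr_F prob_space_law by (auto intro: prob_space_imp_sigma_finite)
  fix D A assume D: "D \<in> sets (restr_to_subalg M (F n))" and A: "A \<in> sets (law M E Y)"
  have "past_future_pair n -` (D \<times> A) \<inter> space M = D \<inter> (box n Y -` A \<inter> space M)" by auto
  then have "emeasure (distr M (restr_to_subalg M (F n) \<Otimes>\<^sub>M law M E Y) (past_future_pair n)) (D \<times> A)
      = ennreal (prob D * measure (law M E Y) A)"
    using D A prob_Int_box_vimage[of D n A]
    by (simp add: emeasure_distr past_future_pair_measurable emeasure_eq_measure sets_restr_F sets_law)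
  also have "\<dots> = emeasure (restr_to_subalg M (F n)) D * emeasure (law M E Y) A"
    using D A emeasure_restr_to_subalg[OF subalgebra_F] law.emeasure_eq_measure
    by (simp add: emeasure_eq_measure ennreal_mult sets_restr_F)
  finally show "emeasure (restr_to_subalg M (F n)) D * emeasure (law M E Y) A
      = emeasure (distr M (restr_to_subalg M (F n) \<Otimes>\<^sub>M law M E Y) (past_future_pair n)) (D \<times> A)"
    by simp
qed simp

lemma sigma_sets_F_box_eq_vimage:
  assumes "B \<in> sigma_sets (space M) (sets (F n) \<union> sigma_box M E n Y)"
  shows "\<exists>S\<in>sets (restr_to_subalg M (F n) \<Otimes>\<^sub>M law M E Y). B = past_future_pair n -` S \<inter> space M"
  using assms
proof (induction rule: sigma_sets.induct)
  case (Basic b)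
  show ?case
  proof (cases "b \<in> sets (F n)")
    case True
    then have "b \<times> space (law M E Y) \<in> sets (restr_to_subalg M (F n) \<Otimes>\<^sub>M law M E Y)"
      by (intro pair_measureI) (auto simp: sets_restr_F)
    moreover have "b = past_future_pair n -` (b \<times> space (law M E Y)) \<inter> space M"
      using sets.sets_into_space[OF True] box_in_space by (auto simp: space_F space_law)
    ultimately show ?thesis by blast
  next
    case False
    with Basic obtain A where A: "A \<in> sets (seqspace E)" and b: "b = box n Y -` A \<inter> space M"
      unfolding sigma_box_def by blast
    have "space M \<times> A \<in> sets (restr_to_subalg M (F n) \<Otimes>\<^sub>M law M E Y)"
      using A space_in_sets_F by (intro pair_measureI) (auto simp: sets_law sets_restr_F)
    moreover have "b = past_future_pair n -` (space M \<times> A) \<inter> space M" unfolding b by auto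
    ultimately show ?thesis by blast
  qed
next
  case Empty
  show ?case by (intro bexI[of _ "{}"]) auto
next
  case (Compl a)
  then obtain S where "S \<in> sets (restr_to_subalg M (F n) \<Otimes>\<^sub>M law M E Y)"
    "a = past_future_pair n -` S \<inter> space M" by blast
  moreover have "space M - past_future_pair n -` S \<inter> space M
      = past_future_pair n -` (space (restr_to_subalg M (F n) \<Otimes>\<^sub>M law M E Y) - S) \<inter> space M"
    using measurable_space[OF past_future_pair_measurable] by blast
  ultimately show ?case by (metis sets.compl_sets)
next
  case (Union A)
  then obtain S where "\<And>i. S i \<in> sets (restr_to_subalg M (F n) \<Otimes>\<^sub>M law M E Y)"
    "\<And>i. A i = past_future_pair n -` S i \<inter> space M" by metis
  then show ?case by (intro bexI[of _ "\<Union>i. S i"]) auto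
qed

end

locale iid_random_time = iid_innovations +
  fixes R :: "'a \<Rightarrow> enat"
  assumes R_measurable: "R \<in> measurable M (count_space UNIV)"
    and prob_R_finite_pos: "measure M {w \<in> space M. R w \<noteq> \<infinity>} > 0"
begin

abbreviation level :: "nat \<Rightarrow> 'a set" where
  "level n \<equiv> {w \<in> space M. R w = enat n}"

abbreviation fin :: "'a set" where
  "fin \<equiv> fin_set M R"

abbreviation law_boxR :: "(nat \<Rightarrow> 'b) measure" where
  "law_boxR \<equiv> distr (condP M R) (seqspace E) (boxR R Y)"

lemma level_events: "level n \<in> events"
proof -
  have "level n = R -` {enat n} \<inter> space M" by auto
  then show ?thesis using measurable_sets[OF R_measurable, of "{enat n}"] by simp
qed

lemma fin_eq_UN_level: "fin = (\<Union>n. level n)"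
  unfolding fin_set_def by auto

lemma level_subset_fin: "level n \<subseteq> fin"
  unfolding fin_set_def by auto

lemma fin_events: "fin \<in> events"
  unfolding fin_eq_UN_level using level_events by auto

lemma prob_fin_pos: "prob fin > 0"
  using prob_R_finite_pos unfolding fin_set_def by simp

lemma sums_prob_Int_level:
  assumes "S \<in> events" "S \<subseteq> fin"
  shows "(\<lambda>n. prob (S \<inter> level n)) sums prob S"
proof -
  have "(\<lambda>n. prob (S \<inter> level n)) sums prob (\<Union>n. S \<inter> level n)"
    using assms(1) level_events by (intro finite_measure_UNION) (auto simp: disjoint_family_on_def)
  moreover have "(\<Union>n. S \<inter> level n) = S" using assms(2) unfolding fin_eq_UN_level by blast
  ultimately show ?thesis by simp
qed

lemma exists_level_prob_pos: "\<exists>n. prob (level n) > 0"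
proof (rule ccontr)
  assume "\<nexists>n. prob (level n) > 0"
  then have "prob (level n) \<le> 0" for n by (simp add: not_less)
  then have "prob (fin \<inter> level n) = 0" for n
    using measure_nonneg[of M "level n"] by (simp add: Int_absorb1 level_subset_fin antisym)
  then have "(\<lambda>n. prob (fin \<inter> level n)) sums 0" by simp
  with sums_prob_Int_level[OF fin_events order_refl] have "prob fin = 0"
    by (rule sums_unique2)
  then show False using prob_fin_pos by simp
qed

lemma sets_condP_iff: "X \<in> sets (condP M R) \<longleftrightarrow> X \<in> events \<and> X \<subseteq> fin"
proof -
  have Pow: "sets (restrict_space M fin) \<subseteq> Pow fin"
    using sets.space_closed[of "restrict_space M fin"] fin_events by simp
  have "sets (condP M R) = sigma_sets fin (sets (restrict_space M fin))"
    unfolding condP_def by (rule sets_measure_of[OF Pow])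
  also have "\<dots> = sets (restrict_space M fin)"
    using sets.sigma_sets_eq[of "restrict_space M fin"] fin_events by simp
  finally show ?thesis
    using sets_restrict_space_iff[of fin M X] fin_events sets.sets_into_space[OF fin_events]
    by (auto simp: Int_absorb2)
qed

lemma space_condP: "space (condP M R) = fin"
  unfolding condP_def
  by (rule space_measure_of) (use sets.space_closed[of "restrict_space M fin"] fin_events in simp)

lemma emeasure_condP:
  assumes "X \<in> events" "X \<subseteq> fin"
  shows "emeasure (condP M R) X = emeasure M X / emeasure M fin"
  unfolding condP_def
proof (rule emeasure_measure_of_sigma)
  show "sigma_algebra fin (sets (restrict_space M fin))"
    using sets.sigma_algebra_axioms[of "restrict_space M fin"] fin_events by simp
  show "positive (sets (restrict_space M fin)) (\<lambda>A. emeasure M A / emeasure M fin)"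
    unfolding positive_def by simp
  have "range A \<subseteq> sets (restrict_space M fin) \<Longrightarrow> range A \<subseteq> events" for A :: "nat \<Rightarrow> 'a set"
    using sets_restrict_space_iff[of fin M] fin_events sets.sets_into_space[OF fin_events]
    by (auto simp: Int_absorb2)
  then show "countably_additive (sets (restrict_space M fin)) (\<lambda>A. emeasure M A / emeasure M fin)"
    unfolding countably_additive_def by (simp add: suminf_emeasure)
  show "X \<in> sets (restrict_space M fin)"
    using assms sets_restrict_space_iff[of fin M X] fin_events by (auto simp: Int_absorb2)
qed

lemma measure_condP:
  assumes "X \<in> events" "X \<subseteq> fin"
  shows "measure (condP M R) X = prob X / prob fin"
proof -
  have "emeasure (condP M R) X = ennreal (prob X / prob fin)"
    using emeasure_condP[OF assms] prob_fin_pos by (simp add: emeasure_eq_measure divide_ennreal)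
  then show ?thesis unfolding measure_def using prob_fin_pos by simp
qed

lemma prob_space_condP: "prob_space (condP M R)"
  using emeasure_condP[OF fin_events] prob_fin_pos
  by (intro prob_spaceI) (simp add: space_condP emeasure_eq_measure divide_ennreal)

lemma FR'_level_decomp:
  assumes "X \<in> FR' M F R"
  shows "X \<in> events \<and> X \<subseteq> fin \<and> (\<forall>n. \<exists>D\<in>sets (F n). X \<inter> level n = D \<inter> level n)"
  using assms unfolding FR'_def
proof (induction rule: sigma_sets.induct)
  case (Basic a)
  then obtain Z B where a: "a = (\<lambda>w. Z (the_enat (R w)) w) -` B \<inter> fin"
    and Z: "\<forall>n. Z n \<in> borel_measurable (F n)" and B: "B \<in> sets (borel :: real measure)"
    by (simp only: mem_Collect_eq) (elim exE conjE, assumption)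
  have Z_vimage: "Z n -` B \<inter> space M \<in> sets (F n)" for n
    using measurable_sets[OF Z[rule_format] B, of n] space_F by simp
  have "a = (\<Union>n. (Z n -` B \<inter> space M) \<inter> level n)"
    unfolding a fin_set_def by auto
  moreover have "(\<Union>n. (Z n -` B \<inter> space M) \<inter> level n) \<in> events"
  proof (rule sets.countable_UN'')
    fix n show "(Z n -` B \<inter> space M) \<inter> level n \<in> events"
      by (rule sets.Int[OF sets_F_events[OF Z_vimage] level_events])
  qed simp
  moreover have "a \<subseteq> fin" unfolding a by auto
  moreover have "\<forall>n. \<exists>D\<in>sets (F n). a \<inter> level n = D \<inter> level n"
  proof
    fix n
    have "a \<inter> level n = (Z n -` B \<inter> space M) \<inter> level n"
      unfolding a fin_set_def by auto
    then show "\<exists>D\<in>sets (F n). a \<inter> level n = D \<inter> level n" using Z_vimage by blast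
  qed
  ultimately show ?case by simp
next
  case Empty
  have "\<forall>n. \<exists>D\<in>sets (F n). {} \<inter> level n = D \<inter> level n"
    using sets.empty_sets by auto
  then show ?case by simp
next
  case (Compl a)
  have "\<forall>n. \<exists>D\<in>sets (F n). (fin - a) \<inter> level n = D \<inter> level n"
  proof
    fix n
    obtain D where D: "D \<in> sets (F n)" "a \<inter> level n = D \<inter> level n"
      using Compl.IH by blast
    then have "(fin - a) \<inter> level n = (space M - D) \<inter> level n"
      using level_subset_fin[of n] by blast
    moreover have "space M - D \<in> sets (F n)"
      using sets.compl_sets[OF D(1)] space_F by simp
    ultimately show "\<exists>D\<in>sets (F n). (fin - a) \<inter> level n = D \<inter> level n" by blast
  qed
  moreover have "fin - a \<in> events" using Compl.IH fin_events by auto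
  ultimately show ?case by simp
next
  case (Union A)
  have "\<forall>n. \<exists>D\<in>sets (F n). (\<Union>i. A i) \<inter> level n = D \<inter> level n"
  proof
    fix n
    have "\<forall>i. \<exists>D. D \<in> sets (F n) \<and> A i \<inter> level n = D \<inter> level n"
      using Union.IH by (simp add: Bex_def)
    from choice[OF this] obtain D
      where D: "\<forall>i. D i \<in> sets (F n) \<and> A i \<inter> level n = D i \<inter> level n" by (elim exE)
    then have "(\<Union>i. A i) \<inter> level n = (\<Union>i. D i) \<inter> level n" by blast
    moreover have "(\<Union>i. D i) \<in> sets (F n)" using D by (intro sets.countable_UN'') simp_all
    ultimately show "\<exists>D\<in>sets (F n). (\<Union>i. A i) \<inter> level n = D \<inter> level n" by blast
  qed
  moreover have "(\<Union>i. A i) \<in> events" using Union.IH by (intro sets.countable_UN'') simp_all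
  moreover have "(\<Union>i. A i) \<subseteq> fin" using Union.IH by auto
  ultimately show ?case by simp
qed

lemma Int_level_in_FR':
  assumes D: "D \<in> sets (F n)"
  shows "D \<inter> level n \<in> FR' M F R"
proof -
  define Z where "Z k w = (if k = n then indicator D w else (0::real))" for k w
  have Z: "\<forall>k. Z k \<in> borel_measurable (F k)"
  proof
    fix k show "Z k \<in> borel_measurable (F k)"
      unfolding Z_def using D by (cases "k = n") auto
  qed
  have "D \<inter> level n = (\<lambda>w. Z (the_enat (R w)) w) -` {1} \<inter> fin"
    using sets.sets_into_space[OF D] space_F
    unfolding Z_def fin_set_def by (auto simp: indicator_def split: if_splits)
  then show ?thesis
    unfolding FR'_def
    by (intro sigma_sets.Basic CollectI exI[of _ Z] exI[of _ "{1}"] conjI Z) simp_all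
qed

lemma fin_in_FR': "fin \<in> FR' M F R"
  unfolding FR'_def by (rule sigma_sets_top)

lemma boxR_vimage_eq_UN:
  "boxR R Y -` A \<inter> fin = (\<Union>n. level n \<inter> (box n Y -` A \<inter> space M))"
  unfolding boxR_def fin_set_def by auto

lemma boxR_vimage_events: "A \<in> sets (seqspace E) \<Longrightarrow> boxR R Y -` A \<inter> fin \<in> events"
  unfolding boxR_vimage_eq_UN using level_events box_vimage_events by blast

lemma boxR_vimage_Int_level:
  "X \<subseteq> fin \<Longrightarrow> X \<inter> (boxR R Y -` A \<inter> fin) \<inter> level n = X \<inter> level n \<inter> (box n Y -` A \<inter> space M)"
  unfolding boxR_def fin_set_def by auto

lemma boxR_measurable_condP: "boxR R Y \<in> measurable (condP M R) (seqspace E)"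
  using box_in_space boxR_vimage_events
  by (intro measurableI) (auto simp: space_condP sets_condP_iff boxR_def fin_set_def)

lemma prob_space_law_boxR: "prob_space law_boxR"
  by (rule prob_space.prob_space_distr[OF prob_space_condP boxR_measurable_condP])

interpretation law_boxR: prob_space law_boxR
  by (rule prob_space_law_boxR)

lemma measure_law_boxR:
  "A \<in> sets (seqspace E) \<Longrightarrow> measure law_boxR A = prob (boxR R Y -` A \<inter> fin) / prob fin"
  using measure_distr[OF boxR_measurable_condP] boxR_vimage_events
  by (simp add: space_condP measure_condP)

lemma stmt_a_iff_prob_mult:
  "stmt_a M F E Y R \<longleftrightarrow> (\<forall>X\<in>FR' M F R. \<forall>A\<in>sets (seqspace E).
     prob (X \<inter> (boxR R Y -` A \<inter> fin)) * prob fin = prob X * prob (boxR R Y -` A \<inter> fin))"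
proof -
  interpret P': prob_space "condP M R" by (rule prob_space_condP)
  have cond_mult_iff: "P'.prob (X \<inter> (boxR R Y -` A \<inter> fin)) = P'.prob X * P'.prob (boxR R Y -` A \<inter> fin)
    \<longleftrightarrow> prob (X \<inter> (boxR R Y -` A \<inter> fin)) * prob fin = prob X * prob (boxR R Y -` A \<inter> fin)"
    if "X \<in> FR' M F R" "A \<in> sets (seqspace E)" for X A
  proof -
    have "X \<in> events" "X \<subseteq> fin" using FR'_level_decomp[OF that(1)] by auto
    with boxR_vimage_events[OF that(2)] prob_fin_pos show ?thesis
      by (simp add: measure_condP Int_absorb1 sets.Int field_simps le_infI2)
  qed
  have "FR' M F R \<subseteq> P'.events" "sigma_boxR M E R Y \<subseteq> P'.events"
    using FR'_level_decomp boxR_vimage_events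
    unfolding sigma_boxR_def by (auto simp: sets_condP_iff)
  then show ?thesis
    unfolding stmt_a_def
  proof (intro iffI ballI)
    fix X A assume "P'.indep_set (FR' M F R) (sigma_boxR M E R Y)" "X \<in> FR' M F R" "A \<in> sets (seqspace E)"
    then show "prob (X \<inter> (boxR R Y -` A \<inter> fin)) * prob fin = prob X * prob (boxR R Y -` A \<inter> fin)"
      using P'.indep_setD cond_mult_iff unfolding sigma_boxR_def by blast
  next
    assume "\<forall>X\<in>FR' M F R. \<forall>A\<in>sets (seqspace E).
      prob (X \<inter> (boxR R Y -` A \<inter> fin)) * prob fin = prob X * prob (boxR R Y -` A \<inter> fin)"
    with \<open>FR' M F R \<subseteq> P'.events\<close> \<open>sigma_boxR M E R Y \<subseteq> P'.events\<close>
    show "P'.indep_set (FR' M F R) (sigma_boxR M E R Y)"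
      by (intro P'.indep_setI) (auto simp: sigma_boxR_def cond_mult_iff)
  qed
qed

subsection \<open>Consequences of the factorization (b)\<close>

context
  fixes G Fn
  assumes witness: "b_witness M F E Y R G Fn"
begin

lemma witness_sets: "G \<in> sets (seqspace E)" "prob (level n) > 0 \<Longrightarrow> Fn n \<in> sets (F n)"
  using witness unfolding b_witness_def by blast+

lemma witness_AE:
  "prob (level n) > 0 \<Longrightarrow> AE w in M. R w = enat n \<longleftrightarrow> w \<in> Fn n \<and> box n Y w \<in> G"
  using witness unfolding b_witness_def by blast

lemma prob_level_Int_box_vimage:
  assumes pos: "prob (level n) > 0" and D: "D \<in> sets (F n)" and A: "A \<in> sets (seqspace E)"
  shows "prob (D \<inter> level n \<inter> (box n Y -` A \<inter> space M)) = prob (D \<inter> Fn n) * measure (law M E Y) (A \<inter> G)"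
proof -
  have DFn: "D \<inter> Fn n \<in> sets (F n)" using D witness_sets(2)[OF pos] by (rule sets.Int)
  have AG: "A \<inter> G \<in> sets (seqspace E)" using A witness_sets(1) by (rule sets.Int)
  have "AE w in M. w \<in> D \<inter> level n \<inter> (box n Y -` A \<inter> space M)
      \<longleftrightarrow> w \<in> D \<inter> Fn n \<inter> (box n Y -` (A \<inter> G) \<inter> space M)"
    using witness_AE[OF pos] by eventually_elim auto
  then have "prob (D \<inter> level n \<inter> (box n Y -` A \<inter> space M))
      = prob (D \<inter> Fn n \<inter> (box n Y -` (A \<inter> G) \<inter> space M))"
    using sets_F_events[OF D] sets_F_events[OF DFn] level_events
      box_vimage_events[OF A] box_vimage_events[OF AG]
    by (intro measure_eq_AE) auto
  also have "\<dots> = prob (D \<inter> Fn n) * measure (law M E Y) (A \<inter> G)"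
    by (rule prob_Int_box_vimage[OF DFn AG])
  finally show ?thesis .
qed

lemma prob_level_Int:
  assumes "prob (level n) > 0" "D \<in> sets (F n)"
  shows "prob (D \<inter> level n) = prob (D \<inter> Fn n) * measure (law M E Y) G"
proof -
  have "box n Y -` space (seqspace E) \<inter> space M = space M" using box_in_space by blast
  then have "prob (D \<inter> level n) = prob (D \<inter> level n \<inter> (box n Y -` space (seqspace E) \<inter> space M))"
    by (simp add: Int_absorb2 Int_assoc)
  also have "\<dots> = prob (D \<inter> Fn n) * measure (law M E Y) (space (seqspace E) \<inter> G)"
    by (rule prob_level_Int_box_vimage[OF assms sets.top])
  also have "space (seqspace E) \<inter> G = G" using sets.sets_into_space[OF witness_sets(1)] by blast
  finally show ?thesis .
qed

lemma law_witness_pos: "measure (law M E Y) G > 0"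
proof -
  obtain n where pos: "prob (level n) > 0" using exists_level_prob_pos by blast
  have "prob (space M \<inter> level n) = prob (space M \<inter> Fn n) * measure (law M E Y) G"
    by (rule prob_level_Int[OF pos space_in_sets_F])
  then have "measure (law M E Y) G \<noteq> 0" using pos by (auto simp: Int_absorb1)
  then show ?thesis using measure_nonneg[of "law M E Y" G] by (auto simp: less_le)
qed

lemma prob_FR'_Int_boxR_vimage:
  assumes X: "X \<in> FR' M F R" and A: "A \<in> sets (seqspace E)"
  shows "prob (X \<inter> (boxR R Y -` A \<inter> fin)) * measure (law M E Y) G
       = prob X * measure (law M E Y) (A \<inter> G)"
proof -
  note X_decomp = FR'_level_decomp[OF X]
  have level_eq: "prob (X \<inter> (boxR R Y -` A \<inter> fin) \<inter> level n) * measure (law M E Y) G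
      = prob (X \<inter> level n) * measure (law M E Y) (A \<inter> G)" for n
  proof (cases "prob (level n) > 0")
    case True
    obtain D where D: "D \<in> sets (F n)" "X \<inter> level n = D \<inter> level n" using X_decomp by blast
    show ?thesis
      unfolding boxR_vimage_Int_level[OF conjunct1[OF conjunct2[OF X_decomp]]] D(2)
      using prob_level_Int_box_vimage[OF True D(1) A] prob_level_Int[OF True D(1)] by simp
  next
    case False
    then have "prob (level n) = 0" using measure_nonneg[of M "level n"] by linarith
    moreover have "prob (X \<inter> level n) \<le> prob (level n)"
      "prob (X \<inter> (boxR R Y -` A \<inter> fin) \<inter> level n) \<le> prob (level n)"
      using X_decomp level_events by (auto intro!: finite_measure_mono)
    ultimately show ?thesis by (simp add: measure_le_0_iff)
  qed
  have "(\<lambda>n. prob (X \<inter> (boxR R Y -` A \<inter> fin) \<inter> level n) * measure (law M E Y) G)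
      sums (prob (X \<inter> (boxR R Y -` A \<inter> fin)) * measure (law M E Y) G)"
    using X_decomp boxR_vimage_events[OF A] by (intro sums_mult2 sums_prob_Int_level) auto
  moreover have "(\<lambda>n. prob (X \<inter> level n) * measure (law M E Y) (A \<inter> G))
      sums (prob X * measure (law M E Y) (A \<inter> G))"
    using X_decomp by (intro sums_mult2 sums_prob_Int_level) auto
  ultimately show ?thesis unfolding level_eq by (rule sums_unique2)
qed

lemma prob_boxR_vimage:
  assumes "A \<in> sets (seqspace E)"
  shows "prob (boxR R Y -` A \<inter> fin) = prob fin * measure (law M E Y) (A \<inter> G) / measure (law M E Y) G"
  using prob_FR'_Int_boxR_vimage[OF fin_in_FR' assms] law_witness_pos
  by (simp add: Int_absorb1 field_simps)

lemma b_witness_imp_stmt_a: "stmt_a M F E Y R"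
  unfolding stmt_a_iff_prob_mult
proof (intro ballI)
  fix X A assume X: "X \<in> FR' M F R" and A: "A \<in> sets (seqspace E)"
  let ?S = "boxR R Y -` A \<inter> fin"
  have fin_S: "prob ?S * measure (law M E Y) G = prob fin * measure (law M E Y) (A \<inter> G)"
    using prob_FR'_Int_boxR_vimage[OF fin_in_FR' A] by (simp add: Int_absorb1)
  have "(prob (X \<inter> ?S) * prob fin) * measure (law M E Y) G
      = prob fin * (prob X * measure (law M E Y) (A \<inter> G))"
    using prob_FR'_Int_boxR_vimage[OF X A] by (simp add: ac_simps)
  also have "\<dots> = (prob X * prob ?S) * measure (law M E Y) G"
    using fin_S by (simp add: ac_simps)
  finally show "prob (X \<inter> ?S) * prob fin = prob X * prob ?S"
    using law_witness_pos by simp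
qed

lemma measure_law_boxR_witness:
  "A \<in> sets (seqspace E) \<Longrightarrow> measure law_boxR A = measure (law M E Y) (A \<inter> G) / measure (law M E Y) G"
  using measure_law_boxR prob_boxR_vimage prob_fin_pos by simp

lemma law_boxR_witness: "law_boxR = uniform_measure (law M E Y) G"
proof (rule measure_eqI)
  fix A assume "A \<in> sets law_boxR"
  then have A: "A \<in> sets (seqspace E)" by simp
  have "emeasure law_boxR A = ennreal (measure (law M E Y) (A \<inter> G)) / ennreal (measure (law M E Y) G)"
    using measure_law_boxR_witness[OF A] law_witness_pos
    by (simp add: law_boxR.emeasure_eq_measure divide_ennreal)
  also have "\<dots> = emeasure (uniform_measure (law M E Y) G) A"
    using A witness_sets(1)
    by (simp add: emeasure_uniform_measure law.emeasure_eq_measure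
        sets_law Int_commute)
  finally show "emeasure law_boxR A = emeasure (uniform_measure (law M E Y) G) A" .
qed (simp add: sets_law)

end

lemma witness_unique_level:
  assumes w1: "b_witness M F E Y R G Fn" and w2: "b_witness M F E Y R G' Fn'"
    and pos: "prob (level n) > 0"
  shows "AE w in M. w \<in> Fn n \<longleftrightarrow> w \<in> Fn' n"
    and "measure (law M E Y) (G - G') = 0"
proof -
  note F1 = witness_sets(2)[OF w1 pos] and F2 = witness_sets(2)[OF w2 pos]
  note G1 = witness_sets(1)[OF w1] and G2 = witness_sets(1)[OF w2]
  have ae: "AE w in M. w \<in> Fn n \<and> box n Y w \<in> G \<longleftrightarrow> w \<in> Fn' n \<and> box n Y w \<in> G'"
    using witness_AE[OF w1 pos] witness_AE[OF w2 pos] by eventually_elim auto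
  have "AE w in M. \<not> (w \<in> Fn n - Fn' n \<and> box n Y w \<in> G)"
    "AE w in M. \<not> (w \<in> Fn' n - Fn n \<and> box n Y w \<in> G')"
    using ae by (eventually_elim, auto)+
  then have "prob (Fn n - Fn' n) = 0" "prob (Fn' n - Fn n) = 0"
    using prob_mult_law_eq_0_if_AE_disjoint[OF sets.Diff[OF F1 F2] G1]
      prob_mult_law_eq_0_if_AE_disjoint[OF sets.Diff[OF F2 F1] G2]
      law_witness_pos[OF w1] law_witness_pos[OF w2] by auto
  then have null: "Fn n - Fn' n \<in> null_sets M" "Fn' n - Fn n \<in> null_sets M"
    using sets_F_events F1 F2 by (auto simp: emeasure_eq_measure)
  show "AE w in M. w \<in> Fn n \<longleftrightarrow> w \<in> Fn' n"
    using AE_not_in[OF null(1)] AE_not_in[OF null(2)] by eventually_elim auto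
  have "prob (level n) = prob (Fn n) * measure (law M E Y) G"
    using prob_level_Int[OF w1 pos space_in_sets_F] sets.sets_into_space[OF F1] space_F
    by (simp add: Int_absorb1)
  moreover have "prob (Fn n) = prob (Fn n \<inter> Fn' n) + prob (Fn n - Fn' n)"
    using sets_F_events F1 F2 by (subst finite_measure_Union[symmetric]) (auto simp: Int_Diff_Un)
  ultimately have "prob (Fn n \<inter> Fn' n) > 0"
    using pos \<open>prob (Fn n - Fn' n) = 0\<close> law_witness_pos[OF w1]
    by (auto simp: zero_less_mult_iff)
  moreover have "AE w in M. \<not> (w \<in> Fn n \<inter> Fn' n \<and> box n Y w \<in> G - G')"
    using ae by eventually_elim auto
  ultimately show "measure (law M E Y) (G - G') = 0"
    using prob_mult_law_eq_0_if_AE_disjoint[OF sets.Int[OF F1 F2] sets.Diff[OF G1 G2]] by simp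
qed

lemma witness_unique:
  assumes w1: "b_witness M F E Y R G Fn" and w2: "b_witness M F E Y R G' Fn'"
  shows "emeasure (law M E Y) ((G - G') \<union> (G' - G)) = 0"
proof -
  obtain n where pos: "prob (level n) > 0" using exists_level_prob_pos by blast
  have "G - G' \<in> sets (law M E Y)" "G' - G \<in> sets (law M E Y)"
    using witness_sets(1)[OF w1] witness_sets(1)[OF w2] by (auto simp: sets_law)
  then have "emeasure (law M E Y) ((G - G') \<union> (G' - G))
      \<le> emeasure (law M E Y) (G - G') + emeasure (law M E Y) (G' - G)"
    by (rule emeasure_subadditive)
  also have "\<dots> = 0"
    using witness_unique_level(2)[OF w1 w2 pos] witness_unique_level(2)[OF w2 w1 pos]
    by (simp add: law.emeasure_eq_measure)
  finally show ?thesis by simp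
qed

lemma level_in_compl_F_if_stmt_ii:
  assumes "stmt_ii M F R"
  shows "level n \<in> compl_sets M (sets (F n))"
proof (cases n)
  case 0
  have "{w \<in> space M. R w \<le> enat 0} \<in> compl_sets M (sets (F 0))"
    using assms unfolding stmt_ii_def by blast
  then show ?thesis using 0 by (simp add: enat_0 ile0_eq)
next
  case (Suc m)
  interpret S: sigma_algebra "space M" "compl_sets M (sets (F n))"
    by (rule compl_sets_sigma_algebra[OF sets_F_subset])
  have "level n = {w \<in> space M. R w \<le> enat n} - {w \<in> space M. R w \<le> enat m}"
  proof (intro set_eqI)
    fix w show "w \<in> level n \<longleftrightarrow> w \<in> {w \<in> space M. R w \<le> enat n} - {w \<in> space M. R w \<le> enat m}"
      using Suc by (cases "R w") auto
  qed
  moreover have "{w \<in> space M. R w \<le> enat m} \<in> compl_sets M (sets (F n))"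
    using assms compl_sets_mono[OF sets_F_mono[of m n]] Suc unfolding stmt_ii_def by auto
  ultimately show ?thesis using assms unfolding stmt_ii_def by auto
qed

lemma stmt_ii_if_level_in_compl_F:
  assumes level_compl: "\<And>k. level k \<in> compl_sets M (sets (F k))"
  shows "stmt_ii M F R"
  unfolding stmt_ii_def
proof
  fix n
  interpret S: sigma_algebra "space M" "compl_sets M (sets (F n))"
    by (rule compl_sets_sigma_algebra[OF sets_F_subset])
  have "{w \<in> space M. R w \<le> enat n} = (\<Union>k\<in>{..n}. level k)"
  proof (intro set_eqI)
    fix w show "w \<in> {w \<in> space M. R w \<le> enat n} \<longleftrightarrow> w \<in> (\<Union>k\<in>{..n}. level k)"
      by (cases "R w") auto
  qed
  also have "\<dots> \<in> compl_sets M (sets (F n))"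
  proof (intro S.finite_UN)
    fix k assume "k \<in> {..n}"
    then show "level k \<in> compl_sets M (sets (F n))"
      using level_compl[of k] compl_sets_mono[OF sets_F_mono[of k n], of M] by auto
  qed simp
  finally show "{w \<in> space M. R w \<le> enat n} \<in> compl_sets M (sets (F n))" .
qed

lemma stmt_ii_imp_b_witness:
  assumes "stmt_ii M F R"
  obtains Fn where "b_witness M F E Y R (space (seqspace E)) Fn"
proof -
  have "\<forall>n. \<exists>B. B \<in> sets (F n) \<and> (AE w in M. w \<in> level n \<longleftrightarrow> w \<in> B)"
  proof
    fix n show "\<exists>B. B \<in> sets (F n) \<and> (AE w in M. w \<in> level n \<longleftrightarrow> w \<in> B)"
      using compl_sets_AE_representative[OF level_in_compl_F_if_stmt_ii[OF assms, of n]]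
        sets.sigma_sets_eq[of "F n"] space_F[of n] by (simp add: Bex_def)
  qed
  from choice[OF this] obtain Fn
    where "\<forall>n. Fn n \<in> sets (F n) \<and> (AE w in M. w \<in> level n \<longleftrightarrow> w \<in> Fn n)"
    by blast
  then have "b_witness M F E Y R (space (seqspace E)) Fn"
    unfolding b_witness_def using AE_space
    by (auto elim!: eventually_mono simp: box_in_space)
  then show ?thesis by (rule that)
qed

lemma stmt_ii_imp_stmt_i:
  assumes "stmt_ii M F R"
  shows "stmt_i M F E Y R"
proof -
  obtain Fn where w: "b_witness M F E Y R (space (seqspace E)) Fn"
    using stmt_ii_imp_b_witness[OF assms] .
  have "uniform_measure (law M E Y) (space (seqspace E)) = law M E Y"
  proof (rule measure_eqI)
    fix A assume "A \<in> sets (uniform_measure (law M E Y) (space (seqspace E)))"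
    then have "A \<in> sets (law M E Y)" by simp
    then show "emeasure (uniform_measure (law M E Y) (space (seqspace E))) A = emeasure (law M E Y) A"
      using sets.sets_into_space[of A "law M E Y"] law.emeasure_space_1
      by (simp add: space_law[symmetric] Int_absorb2 divide_ennreal_def)
  qed simp
  then show ?thesis
    unfolding stmt_i_def using b_witness_imp_stmt_a[OF w] law_boxR_witness[OF w] by simp
qed

subsection \<open>Recovering the factorization from (a)\<close>

lemma prob_level_Int_box_vimage_if_stmt_a:
  assumes a: "stmt_a M F E Y R" and D: "D \<in> sets (F n)" and A: "A \<in> sets (seqspace E)"
  shows "prob (D \<inter> level n \<inter> (box n Y -` A \<inter> space M)) = prob (D \<inter> level n) * measure law_boxR A"
proof -
  have "D \<inter> level n \<subseteq> fin" unfolding fin_set_def by auto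
  with a Int_level_in_FR'[OF D] A
  have "prob (D \<inter> level n \<inter> (boxR R Y -` A \<inter> fin)) * prob fin
      = prob (D \<inter> level n) * prob (boxR R Y -` A \<inter> fin)"
    unfolding stmt_a_iff_prob_mult by blast
  moreover have "D \<inter> level n \<inter> (boxR R Y -` A \<inter> fin) = D \<inter> level n \<inter> (box n Y -` A \<inter> space M)"
    unfolding boxR_def fin_set_def by auto
  ultimately have "prob fin * prob (D \<inter> level n \<inter> (box n Y -` A \<inter> space M))
      = prob fin * (prob (D \<inter> level n) * measure law_boxR A)"
    using measure_law_boxR[OF A] prob_fin_pos by (simp add: field_simps)
  then show ?thesis using prob_fin_pos by simp
qed

lemma law_boxR_absolutely_continuous: "absolutely_continuous (law M E Y) law_boxR"
  unfolding absolutely_continuous_def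
proof
  fix A assume "A \<in> null_sets (law M E Y)"
  then have A: "A \<in> sets (seqspace E)" and "measure (law M E Y) A = 0"
    by (auto simp: sets_law law.emeasure_eq_measure)
  then have "emeasure M (box k Y -` A \<inter> space M) = 0" for k
    using prob_box_vimage[OF A] by (simp add: emeasure_eq_measure)
  then have "emeasure M (boxR R Y -` A \<inter> fin) = 0"
    unfolding boxR_vimage_eq_UN using level_events box_vimage_events[OF A]
    by (intro emeasure_UN_eq_0) (auto intro: emeasure_eq_0[of "box _ Y -` A \<inter> space M"])
  moreover have "emeasure law_boxR A = emeasure (condP M R) (boxR R Y -` A \<inter> fin)"
    using A by (simp add: emeasure_distr boxR_measurable_condP space_condP)
  ultimately have "emeasure law_boxR A = 0"
    using emeasure_condP[OF boxR_vimage_events[OF A]] by simp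
  then show "A \<in> null_sets law_boxR" using A by auto
qed

abbreviation law_boxR_density_support :: "(nat \<Rightarrow> 'b) set" where
  "law_boxR_density_support \<equiv> {y \<in> space (law M E Y). RN_deriv (law M E Y) law_boxR y \<noteq> 0}"

definition level_measure :: "nat \<Rightarrow> 'a measure" where
  "level_measure n = distr (density M (indicator (level n))) (restr_to_subalg M (F n)) (\<lambda>w. w)"

lemma
  shows sets_level_measure: "sets (level_measure n) = sets (F n)"
    and emeasure_level_measure: "D \<in> sets (F n) \<Longrightarrow> emeasure (level_measure n) D = emeasure M (D \<inter> level n)"
    and finite_measure_level_measure: "finite_measure (level_measure n)"
proof -
  have id: "(\<lambda>w. w) \<in> measurable (density M (indicator (level n))) (restr_to_subalg M (F n))"
    by (rule measurableI) (auto simp: space_restr_F sets_restr_F sets_F_events)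
  show "sets (level_measure n) = sets (F n)"
    unfolding level_measure_def by (simp add: sets_restr_F)
  show "emeasure (level_measure n) D = emeasure M (D \<inter> level n)" if "D \<in> sets (F n)"
    using that sets.sets_into_space[OF that] space_F sets_F_events[OF that]
    unfolding level_measure_def
    by (simp add: emeasure_distr[OF id] sets_restr_F emeasure_restricted[OF level_events]
        Int_absorb2 Int_commute)
  show "finite_measure (level_measure n)"
    unfolding level_measure_def
    by (rule finite_measure.finite_measure_distr[OF finite_measure_restricted[OF level_events] id])
qed

lemma level_measure_absolutely_continuous:
  "absolutely_continuous (restr_to_subalg M (F n)) (level_measure n)"
  unfolding absolutely_continuous_def
proof
  fix D assume "D \<in> null_sets (restr_to_subalg M (F n))"
  then have D: "D \<in> sets (F n)" and "emeasure (restr_to_subalg M (F n)) D = 0"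
    by (auto simp: null_sets_def sets_restr_F)
  then have "emeasure M D = 0"
    using emeasure_restr_to_subalg[OF subalgebra_F D] by simp
  then have "emeasure M (D \<inter> level n) = 0"
    using sets_F_events[OF D] by (auto intro: emeasure_eq_0)
  then show "D \<in> null_sets (level_measure n)"
    using D by (intro null_setsI) (simp_all add: emeasure_level_measure sets_level_measure)
qed

lemma level_pair_measure_eq_density:
  assumes a: "stmt_a M F E Y R"
    and S: "S \<in> sets (restr_to_subalg M (F n) \<Otimes>\<^sub>M law M E Y)"
    and ae: "AE w in M. w \<in> level n \<longleftrightarrow> past_future_pair n w \<in> S"
  shows "level_measure n \<Otimes>\<^sub>M law_boxR = density (restr_to_subalg M (F n) \<Otimes>\<^sub>M law M E Y) (indicator S)"
proof (rule pair_measure_eqI)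
  show "sigma_finite_measure (level_measure n)" "sigma_finite_measure law_boxR"
    using finite_measure_level_measure prob_space_law_boxR
    by (auto intro: finite_measure.axioms(1) prob_space_imp_sigma_finite)
  show "sets (level_measure n \<Otimes>\<^sub>M law_boxR)
      = sets (density (restr_to_subalg M (F n) \<Otimes>\<^sub>M law M E Y) (indicator S))"
    by (simp add: sets_level_measure sets_law sets_restr_F cong: sets_pair_measure_cong)
  fix D A assume "D \<in> sets (level_measure n)" "A \<in> sets law_boxR"
  then have D: "D \<in> sets (F n)" and A: "A \<in> sets (seqspace E)" by (auto simp: sets_level_measure)
  have DA: "D \<times> A \<in> sets (restr_to_subalg M (F n) \<Otimes>\<^sub>M law M E Y)"
    using D A by (auto simp: sets_restr_F sets_law)
  have "AE w in M. w \<in> past_future_pair n -` (S \<inter> D \<times> A) \<inter> space M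
      \<longleftrightarrow> w \<in> D \<inter> level n \<inter> (box n Y -` A \<inter> space M)"
    using ae by eventually_elim auto
  moreover have "past_future_pair n -` (S \<inter> D \<times> A) \<inter> space M \<in> events"
    using measurable_sets[OF past_future_pair_measurable sets.Int[OF S DA]] .
  moreover have "D \<inter> level n \<inter> (box n Y -` A \<inter> space M) \<in> events"
    using sets_F_events[OF D] level_events box_vimage_events[OF A] by blast
  ultimately have eq_M: "emeasure M (past_future_pair n -` (S \<inter> D \<times> A) \<inter> space M)
      = emeasure M (D \<inter> level n \<inter> (box n Y -` A \<inter> space M))"
    by (rule emeasure_eq_AE)
  have "emeasure (density (restr_to_subalg M (F n) \<Otimes>\<^sub>M law M E Y) (indicator S)) (D \<times> A)
      = emeasure (distr M (restr_to_subalg M (F n) \<Otimes>\<^sub>M law M E Y) (past_future_pair n)) (S \<inter> D \<times> A)"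
    by (simp add: emeasure_restricted[OF S DA] distr_past_future_pair)
  also have "\<dots> = emeasure M (D \<inter> level n \<inter> (box n Y -` A \<inter> space M))"
    using emeasure_distr[OF past_future_pair_measurable sets.Int[OF S DA]] eq_M by simp
  also have "\<dots> = ennreal (prob (D \<inter> level n)) * ennreal (measure law_boxR A)"
    using prob_level_Int_box_vimage_if_stmt_a[OF a D A]
    by (simp add: emeasure_eq_measure ennreal_mult)
  also have "\<dots> = emeasure (level_measure n) D * emeasure law_boxR A"
    using D by (simp add: emeasure_level_measure emeasure_eq_measure
        law_boxR.emeasure_eq_measure)
  finally show "emeasure (level_measure n) D * emeasure law_boxR A
      = emeasure (density (restr_to_subalg M (F n) \<Otimes>\<^sub>M law M E Y) (indicator S)) (D \<times> A)"
    by simp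
qed

lemma stmt_a_imp_level_factorization:
  assumes a: "stmt_a M F E Y R" and H: "level n \<in> compl_sets M (sets (F n) \<union> sigma_box M E n Y)"
  shows "\<exists>D\<in>sets (F n). AE w in M. R w = enat n \<longleftrightarrow> w \<in> D \<and> box n Y w \<in> law_boxR_density_support"
proof -
  let ?Q = "restr_to_subalg M (F n) \<Otimes>\<^sub>M law M E Y"
  let ?D = "{x \<in> space (restr_to_subalg M (F n)). RN_deriv (restr_to_subalg M (F n)) (level_measure n) x \<noteq> 0}"
  obtain B where B: "B \<in> sigma_sets (space M) (sets (F n) \<union> sigma_box M E n Y)"
    and aeB: "AE w in M. w \<in> level n \<longleftrightarrow> w \<in> B"
    using compl_sets_AE_representative[OF H] by blast
  obtain S where S: "S \<in> sets ?Q" and BS: "B = past_future_pair n -` S \<inter> space M"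
    using sigma_sets_F_box_eq_vimage[OF B] by blast
  have "AE z in ?Q. z \<in> S \<longleftrightarrow> z \<in> ?D \<times> law_boxR_density_support"
  proof (rule AE_mem_rectangle_if_density_indicator_eq_pair_measure[OF _ _ _ _ _ _ _ S])
    show "level_measure n \<Otimes>\<^sub>M law_boxR = density ?Q (indicator S)"
      using aeB by (intro level_pair_measure_eq_density[OF a S]) (auto simp: BS)
  qed (use prob_space_restr_F prob_space_law finite_measure_level_measure prob_space_law_boxR
      level_measure_absolutely_continuous law_boxR_absolutely_continuous in
      \<open>auto intro: prob_space_imp_sigma_finite finite_measure.axioms(1)
        simp: sets_level_measure sets_restr_F sets_law\<close>)
  then have ae_distr: "AE z in distr M ?Q (past_future_pair n). z \<in> S \<longleftrightarrow> z \<in> ?D \<times> law_boxR_density_support"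
    by (simp only: distr_past_future_pair)
  have D: "?D \<in> sets (restr_to_subalg M (F n))" by measurable
  have "law_boxR_density_support \<in> sets (law M E Y)" by measurable
  with D have DW: "?D \<times> law_boxR_density_support \<in> sets ?Q" by (rule pair_measureI)
  have "{z \<in> space ?Q. z \<in> S \<longleftrightarrow> z \<in> ?D \<times> law_boxR_density_support}
      = (S \<inter> ?D \<times> law_boxR_density_support) \<union> ((space ?Q - S) \<inter> (space ?Q - ?D \<times> law_boxR_density_support))"
    using sets.sets_into_space[OF S] by blast
  also have "\<dots> \<in> sets ?Q" using S DW by (intro sets.Un sets.Int sets.compl_sets)
  finally have "AE w in M. past_future_pair n w \<in> S \<longleftrightarrow> past_future_pair n w \<in> ?D \<times> law_boxR_density_support"
    using ae_distr by (simp add: AE_distr_iff[OF past_future_pair_measurable])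
  then have "AE w in M. R w = enat n \<longleftrightarrow> w \<in> ?D \<and> box n Y w \<in> law_boxR_density_support"
    using aeB AE_space by eventually_elim (auto simp: BS)
  moreover have "?D \<in> sets (F n)" using D by (simp add: sets_restr_F)
  ultimately show ?thesis by blast
qed

lemma stmt_a_imp_stmt_b:
  assumes "stmt_a M F E Y R" "\<forall>n. level n \<in> compl_sets M (sets (F n) \<union> sigma_box M E n Y)"
  shows "stmt_b M F E Y R"
proof -
  have "\<forall>n. \<exists>D. D \<in> sets (F n) \<and>
      (AE w in M. R w = enat n \<longleftrightarrow> w \<in> D \<and> box n Y w \<in> law_boxR_density_support)"
    using stmt_a_imp_level_factorization[OF assms(1)] assms(2) by blast
  from choice[OF this] obtain Fn where "\<forall>n. Fn n \<in> sets (F n) \<and>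
      (AE w in M. R w = enat n \<longleftrightarrow> w \<in> Fn n \<and> box n Y w \<in> law_boxR_density_support)"
    by blast
  moreover have "law_boxR_density_support \<in> sets (seqspace E)"
    using borel_measurable_RN_deriv[of "law M E Y" law_boxR] by (simp add: sets_law[symmetric])
  ultimately show ?thesis unfolding stmt_b_def b_witness_def by blast
qed

lemma stmt_i_imp_stmt_ii:
  assumes i: "stmt_i M F E Y R" and H: "\<forall>n. level n \<in> compl_sets M (sets (F n) \<union> sigma_box M E n Y)"
  shows "stmt_ii M F R"
proof -
  have a: "stmt_a M F E Y R" and law_eq: "law_boxR = law M E Y"
    using i unfolding stmt_i_def by auto
  obtain G Fn where w: "b_witness M F E Y R G Fn"
    using stmt_a_imp_stmt_b[OF a H] unfolding stmt_b_def by blast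
  let ?Gc = "space (seqspace E) - G"
  have Gc: "?Gc \<in> sets (seqspace E)" using witness_sets(1)[OF w] by auto
  have "?Gc \<inter> G = {}" by blast
  then have "measure (law M E Y) ?Gc = 0"
    using measure_law_boxR_witness[OF w Gc] law_eq by simp
  then have null_Gc: "box k Y -` ?Gc \<inter> space M \<in> null_sets M" for k
    using prob_box_vimage[OF Gc, of k] box_vimage_events[OF Gc]
    by (intro null_setsI) (simp_all add: emeasure_eq_measure)
  have "level k \<in> compl_sets M (sets (F k))" for k
  proof (cases "prob (level k) > 0")
    case True
    have "AE w in M. w \<in> level k \<longleftrightarrow> w \<in> Fn k"
      using witness_AE[OF w True] AE_not_in[OF null_Gc[of k]] AE_space
      by eventually_elim (auto simp: box_in_space)
    then show ?thesis
      by (rule compl_setsI_AE_eq[OF sets_F_subset witness_sets(2)[OF w True] level_events])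
  next
    case False
    then have "level k \<in> null_sets M"
      using level_events measure_nonneg[of M "level k"] by (auto simp: emeasure_eq_measure)
    then show ?thesis unfolding compl_sets_def by (intro sigma_sets.Basic) simp
  qed
  then show ?thesis by (rule stmt_ii_if_level_in_compl_F)
qed

end

theorem theorem2p2:
  fixes M :: "'a measure" and F :: "nat \<Rightarrow> 'a measure" and E :: "'b measure"
    and Y :: "nat \<Rightarrow> 'a \<Rightarrow> 'b" and R :: "'a \<Rightarrow> enat"
  assumes "prob_space M"
    and "filtration (space M) F"
    and "\<And>n. sets (F n) \<subseteq> sets M"
    and "\<And>n. n \<ge> 1 \<Longrightarrow> Y n \<in> measurable (F n) E"
    and "\<And>i. prob_space.indep_set M (sets (F i))
                {Y (Suc i) -` A \<inter> space M | A. A \<in> sets E}"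
    and "\<And>i. distr M E (Y (Suc i)) = distr M E (Y 1)"
    and "R \<in> measurable M (count_space UNIV)"
    and "measure M {w \<in> space M. R w \<noteq> \<infinity>} > 0"
  shows "(stmt_b M F E Y R \<longrightarrow> stmt_a M F E Y R)
    \<and> (stmt_ii M F R \<longrightarrow> stmt_i M F E Y R)
    \<and> ((\<forall>n::nat. {w \<in> space M. R w = enat n} \<in> compl_sets M (sets (F n) \<union> sigma_box M E n Y))
        \<longrightarrow> (stmt_a M F E Y R \<longrightarrow> stmt_b M F E Y R) \<and> (stmt_i M F E Y R \<longrightarrow> stmt_ii M F R))
    \<and> (\<forall>G Fn. b_witness M F E Y R G Fn \<longrightarrow>
         (\<forall>G' Fn'. b_witness M F E Y R G' Fn' \<longrightarrow>
            emeasure (law M E Y) ((G - G') \<union> (G' - G)) = 0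
            \<and> (\<forall>n::nat. measure M {w \<in> space M. R w = enat n} > 0 \<longrightarrow>
                  (AE w in M. (w \<in> Fn n \<longleftrightarrow> w \<in> Fn' n))))
         \<and> distr (condP M R) (seqspace E) (boxR R Y) = uniform_measure (law M E Y) G
         \<and> (\<forall>A \<in> sets (seqspace E).
              measure (distr (condP M R) (seqspace E) (boxR R Y)) A
              = measure M {w \<in> space M. box 0 Y w \<in> A \<inter> G} / measure M {w \<in> space M. box 0 Y w \<in> G}))"
proof -
  interpret iid_random_time M F E Y R
    unfolding iid_random_time_def iid_random_time_axioms_def iid_innovations_def
      iid_innovations_axioms_def
    using assms by simp
  have law_as_prob: "measure (law M E Y) A = measure M {w \<in> space M. box 0 Y w \<in> A}"
    if "A \<in> sets (seqspace E)" for A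
    using measure_law[OF that] by (simp add: vimage_def Collect_conj_eq Int_commute)
  show ?thesis
    using b_witness_imp_stmt_a stmt_ii_imp_stmt_i stmt_a_imp_stmt_b stmt_i_imp_stmt_ii witness_unique witness_unique_level(1)
      law_boxR_witness measure_law_boxR_witness witness_sets(1) law_as_prob
    unfolding stmt_b_def by auto
qed

end
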